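(* Let $m,n,d,n_0$ be positive integers, $R>0$, $\mathbb{S}^d:=[-R,R]^d$, $x\in\mathbb{R}^{m\times n}$, and let $G:\mathbb{R}^d\to\mathbb{R}^{m\times n}$ be continuous. Assume there exists $z^*\in\mathbb{S}^d$ with $\|x-G(z^* )\|_0\le n_0$. For $\lambda>0$ consider $$(\mathrm{P}_\lambda):\quad \min_{z\in\mathbb{S}^d,\ M\in\mathbb{R}^{m\times n}} \|(\mathbf{1}-M)\odot x-(\mathbf{1}-M)\odot G(z)\|_2^2+\lambda\|M\|_1 ,$$ and let $\hat M(\lambda)$ be any optimal $M$-component of a solution of $(\mathrm{P}_\lambda)$. Let $\tilde n=\min_{z\in\mathbb{S}^d}\|x-G(z)\|_0$, $\tilde{\mathcal{Z}}=\{z\in\mathbb{S}^d:\|x-G(z)\|_0=\tilde n\}$, and $\tilde{\mathcal{M}}:=\{I_{x-G(\tilde z)}:\tilde z\in\tilde{\mathcal{Z}}\}$, so that $\tilde{\mathcal M}\subseteq\{M\in\{0,1\}^{m\times n}:\|M\|_0\le\tilde n\}$. Then $d_\infty(\hat M(\lambda),\tilde{\mathcal{M}})\downarrow 0$ as $\lambda\downarrow 0$. Moreover, there is a finite $\tilde\lambda>0$ such that for every $\lambda\le\tilde\lambda$ there exists $\tilde M\in\tilde{\mathcal{M}}$ with $\tilde M=I_{\hat M(\lambda)}$. If in addition $\tilde{\mathcal{Z}}=\{z^*\}$, then, with $M^*:=I_{x-G(z^* )}$, (i) $\hat M(\lambda)\to M^*$ as $\lambda\downarrow 0$, and (ii)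 $I_{\hat M(\lambda)}=M^*$ for every $\lambda\le\tilde\lambda$.
   Context: For a matrix $T$, $\|T\|_0$ is the number of nonzero entries, and $\|T\|_1,\|T\|_2,\|T\|_\infty$ are computed by treating $T$ as a vector. $I_T$ denotes the nonzero mask of $T$: $(I_T)_{ij}=0$ if $T_{ij}=0$ and $1$ otherwise. $\mathbf{1}$ is the all-ones $m\times n$ matrix and $\odot$ is the entrywise product. For a point $a$ and a set $B$, $d_\infty(a,B):=\inf_{b\in B}\|a-b\|_\infty$. *)

theory Defs
  imports "HOL-Analysis.Analysis"
begin

text \<open>m x n real matrices are rendered as real^'n^'m (entry (i,j) is T$i$j);
  points of R^d as real^'d.  The finite index types fix the dimensions.\<close>

definition mat_l0 :: "real^'n^'m \<Rightarrow> nat" where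
  "mat_l0 T = card {(i,j). T$i$j \<noteq> 0}"

definition mat_l1 :: "real^'n^'m \<Rightarrow> real" where
  "mat_l1 T = (\<Sum>i\<in>UNIV. \<Sum>j\<in>UNIV. \<bar>T$i$j\<bar>)"

definition mat_l2 :: "real^'n^'m \<Rightarrow> real" where
  "mat_l2 T = sqrt (\<Sum>i\<in>UNIV. \<Sum>j\<in>UNIV. (T$i$j)^2)"

definition mat_linf :: "real^'n^'m \<Rightarrow> real" where
  "mat_linf T = Max ((\<lambda>(i,j). \<bar>T$i$j\<bar>) ` UNIV)"

definition nzmask :: "real^'n^'m \<Rightarrow> real^'n^'m" where
  "nzmask T = (\<chi> i j. if T$i$j = 0 then 0 else 1)"

definition ones_mat :: "real^'n^'m" where
  "ones_mat = (\<chi> i j. 1)"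

definition hadamard :: "real^'n^'m \<Rightarrow> real^'n^'m \<Rightarrow> real^'n^'m" where
  "hadamard A B = (\<chi> i j. A$i$j * B$i$j)"

definition d_inf :: "real^'n^'m \<Rightarrow> (real^'n^'m) set \<Rightarrow> real" where
  "d_inf a B = Inf ((\<lambda>b. mat_linf (a - b)) ` B)"

definition box_set :: "real \<Rightarrow> (real^'d) set" where
  "box_set R = {z. \<forall>k. \<bar>z$k\<bar> \<le> R}"

definition obj :: "(real^'d \<Rightarrow> real^'n^'m) \<Rightarrow> real^'n^'m \<Rightarrow> real \<Rightarrow> real^'d \<Rightarrow> real^'n^'m \<Rightarrow> real" where
  "obj G x lam z M =
     (mat_l2 (hadamard (ones_mat - M) x - hadamard (ones_mat - M) (G z)))^2 + lam * mat_l1 M"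

definition is_solution :: "real \<Rightarrow> (real^'d \<Rightarrow> real^'n^'m) \<Rightarrow> real^'n^'m \<Rightarrow> real \<Rightarrow> real^'d \<Rightarrow> real^'n^'m \<Rightarrow> bool" where
  "is_solution R G x lam z M \<longleftrightarrow> z \<in> box_set R \<and>
     (\<forall>z'\<in>box_set R. \<forall>M'. obj G x lam z M \<le> obj G x lam z' M')"

definition opt_M :: "real \<Rightarrow> (real^'d \<Rightarrow> real^'n^'m) \<Rightarrow> real^'n^'m \<Rightarrow> real \<Rightarrow> real^'n^'m \<Rightarrow> bool" where
  "opt_M R G x lam M \<longleftrightarrow> (\<exists>z. is_solution R G x lam z M)"

definition n_tilde :: "real \<Rightarrow> (real^'d \<Rightarrow> real^'n^'m) \<Rightarrow> real^'n^'m \<Rightarrow> nat" where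
  "n_tilde R G x = Min ((\<lambda>z. mat_l0 (x - G z)) ` box_set R)"

definition Z_tilde :: "real \<Rightarrow> (real^'d \<Rightarrow> real^'n^'m) \<Rightarrow> real^'n^'m \<Rightarrow> (real^'d) set" where
  "Z_tilde R G x = {z \<in> box_set R. mat_l0 (x - G z) = n_tilde R G x}"

definition M_tilde :: "real \<Rightarrow> (real^'d \<Rightarrow> real^'n^'m) \<Rightarrow> real^'n^'m \<Rightarrow> (real^'n^'m) set" where
  "M_tilde R G x = (\<lambda>z. nzmask (x - G z)) ` Z_tilde R G x"

end

(*
  For fixed z the problem separates over the entries: with a = (x - G z)_p^2 the entry M_p
  minimises (1 - t)^2 a + lam |t|, so M_p = 1 - lam/(2a) if a > lam/2 and M_p = 0 otherwise.
  Comparing with the mask of a sparsest residual bounds the optimal value by lam * n~.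

  By compactness of the box and continuity of G there is e > 0 such that for every z in the
  box and every index set T with |T| <= n~ that is not the support of a sparsest residual,
  the mass of (x - G z)^2 outside T is at least e.  Hence every residual has at least n~
  entries with (x - G z)_p^2 >= b := e/(mn), each costing almost lam.  For small lam this
  forces the support of an optimal M to be exactly such a set of n~ entries, with mass
  O(lam) < e outside it, so it is the support of a sparsest residual.  On the support
  M_p = 1 - lam/(2a) with a >= b, so M lies within lam/(2b) of its mask.
*)
theory Submission
  imports Defs
begin

section \<open>The scalar problem\<close>

definition scalar_obj :: "real \<Rightarrow> real \<Rightarrow> real \<Rightarrow> real" where
  "scalar_obj lam a t = (1 - t)^2 * a + lam * \<bar>t\<bar>"

definition shrink :: "real \<Rightarrow> real \<Rightarrow> real" where
  "shrink lam a = (if lam/2 < a then 1 - lam/(2*a) else 0)"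

definition scalar_min :: "real \<Rightarrow> real \<Rightarrow> real" where
  "scalar_min lam a = (if lam/2 < a then lam - lam^2/(4*a) else a)"

lemma scalar_obj_shrink:
  assumes "0 < lam"
  shows "scalar_obj lam a (shrink lam a) = scalar_min lam a"
proof (cases "lam/2 < a")
  case True
  then have "0 < a" "lam/(2*a) \<le> 1" using assms by (auto simp: field_simps)
  then show ?thesis
    using True by (simp add: scalar_obj_def shrink_def scalar_min_def field_simps power2_eq_square)
qed (simp add: scalar_obj_def shrink_def scalar_min_def)

lemma scalar_min_le:
  assumes "0 < lam"
  shows "scalar_min lam a \<le> a"
proof (cases "lam/2 < a")
  case True
  with assms have "0 < a" by simp
  with True have "a - scalar_min lam a = (2*a - lam)^2 / (4*a)"
    by (simp add: scalar_min_def field_simps power2_eq_square)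
  moreover have "0 \<le> (2*a - lam)^2 / (4*a)" using \<open>0 < a\<close> by simp
  ultimately show ?thesis by linarith
qed (simp add: scalar_min_def)

lemma scalar_min_less_scalar_obj:
  assumes "0 < lam" "0 \<le> a" "t \<noteq> shrink lam a"
  shows "scalar_min lam a < scalar_obj lam a t"
proof (cases "0 \<le> t")
  case True
  show ?thesis
  proof (cases "lam/2 < a")
    case big: True
    then have "0 < a" using assms(1) by simp
    have "scalar_obj lam a t - scalar_min lam a = a * (t - shrink lam a)^2"
      using big True \<open>0 < a\<close> unfolding scalar_obj_def shrink_def scalar_min_def
      by (simp add: field_simps power2_eq_square)
    moreover have "0 < a * (t - shrink lam a)^2" using \<open>0 < a\<close> assms(3) by simp
    ultimately show ?thesis by simp
  next
    case False
    then have "0 < t" using True assms(3) by (simp add: shrink_def)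
    have "0 < a * t^2 + (lam - 2*a) * t"
    proof (cases "a = 0")
      case False
      with assms(2) \<open>0 < t\<close> have "0 < a * t^2" by simp
      moreover have "0 \<le> (lam - 2*a) * t" using \<open>\<not> lam/2 < a\<close> \<open>0 < t\<close> by simp
      ultimately show ?thesis by linarith
    qed (use \<open>0 < t\<close> assms(1) in simp)
    then show ?thesis using False True
      by (simp add: scalar_obj_def scalar_min_def power2_eq_square algebra_simps)
  qed
next
  case False
  have "1 \<le> (1 - t)^2" using False by (intro one_le_power) simp
  then have "a \<le> (1 - t)^2 * a" using assms(2) by (simp add: mult_le_cancel_right1)
  moreover have "0 < lam * \<bar>t\<bar>" using False assms(1) by (simp add: mult_pos_neg)
  ultimately have "a < scalar_obj lam a t" by (simp add: scalar_obj_def)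
  then show ?thesis using scalar_min_le[OF assms(1), of a] by linarith
qed

lemma scalar_min_le_scalar_obj:
  assumes "0 < lam" "0 \<le> a"
  shows "scalar_min lam a \<le> scalar_obj lam a t"
  using scalar_min_less_scalar_obj[OF assms, of t] scalar_obj_shrink[OF assms(1), of a]
  by (cases "t = shrink lam a") auto

lemma shrink_eq_0_iff:
  assumes "0 < lam"
  shows "shrink lam a = 0 \<longleftrightarrow> a \<le> lam/2"
  using assms by (auto simp: shrink_def field_simps)

lemma scalar_min_mono:
  assumes "0 < lam" "a \<le> a'"
  shows "scalar_min lam a \<le> scalar_min lam a'"
proof (cases "lam/2 < a")
  case True
  then have "lam^2/(4*a') \<le> lam^2/(4*a)"
    using assms by (intro divide_left_mono) auto
  then show ?thesis using True assms by (simp add: scalar_min_def)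
next
  case False
  show ?thesis
  proof (cases "lam/2 < a'")
    case True
    then have "lam^2/(4*a') \<le> lam/2"
      using assms(1) by (simp add: field_simps power2_eq_square)
    then show ?thesis using False True by (simp add: scalar_min_def)
  qed (use False assms in \<open>simp add: scalar_min_def\<close>)
qed

lemma scalar_min_nonneg: "0 < lam \<Longrightarrow> 0 \<le> a \<Longrightarrow> 0 \<le> scalar_min lam a"
  using scalar_min_mono[of lam 0 a] by (simp add: scalar_min_def)

lemma scalar_min_ge_half: "0 < lam \<Longrightarrow> lam/2 \<le> a \<Longrightarrow> lam/2 \<le> scalar_min lam a"
  using scalar_min_mono[of lam "lam/2" a] by (simp add: scalar_min_def)

lemma thresholded_support:
  fixes a :: "'p::finite \<Rightarrow> real"
  assumes lam: "0 < lam" and small: "real (N + 1) * lam < 2 * b" and a_nonneg: "\<And>p. 0 \<le> a p"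
    and total: "(\<Sum>p\<in>UNIV. scalar_min lam (a p)) \<le> lam * N"
    and large: "N \<le> card {p. b \<le> a p}"
  shows "{p. lam/2 < a p} = {p. b \<le> a p}" and "card {p. b \<le> a p} = N"
proof -
  define S B where "S = {p. lam/2 < a p}" and "B = {p. b \<le> a p}"
  have "lam \<le> real (N + 1) * lam" using lam by simp
  then have "lam < 2 * b" using small by linarith
  then have BS: "B \<subseteq> S" unfolding S_def B_def by auto
  obtain B' where B': "B' \<subseteq> B" "card B' = N"
    using obtain_subset_with_card_n[OF large] unfolding B_def by blast
  have "S \<subseteq> B'"
  proof
    fix p0 assume "p0 \<in> S"
    show "p0 \<in> B'"
    proof (rule ccontr)
      assume "p0 \<notin> B'"
      \<comment> \<open>the \<open>N\<close> values in \<open>B'\<close> already cost almost \<open>lam * N\<close>, and \<open>p0\<close> costs at least \<open>lam/2\<close>\<close>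
      have "real N * scalar_min lam b \<le> (\<Sum>p\<in>B'. scalar_min lam (a p))"
        using sum_bounded_below[of B' "scalar_min lam b"] B' scalar_min_mono[OF lam]
        unfolding B_def by (simp add: subset_iff)
      moreover have "lam/2 \<le> scalar_min lam (a p0)"
        using \<open>p0 \<in> S\<close> scalar_min_ge_half[OF lam] unfolding S_def by simp
      moreover have "(\<Sum>p\<in>insert p0 B'. scalar_min lam (a p)) \<le> (\<Sum>p\<in>UNIV. scalar_min lam (a p))"
        by (intro sum_mono2 scalar_min_nonneg lam a_nonneg) auto
      ultimately have "real N * scalar_min lam b + lam/2 \<le> lam * N"
        using total \<open>p0 \<notin> B'\<close> by (simp add: finite_subset[OF subset_UNIV])
      moreover have "scalar_min lam b = lam - lam^2/(4*b)"
        using \<open>lam < 2 * b\<close> by (simp add: scalar_min_def)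
      ultimately have "lam/2 \<le> real N * lam^2 / (4 * b)"
        by (simp add: algebra_simps)
      then have "lam/2 * (4 * b) \<le> real N * lam^2"
        using \<open>lam < 2 * b\<close> lam by (simp add: le_divide_eq)
      then have "2 * b \<le> real N * lam"
        using lam by (simp add: power2_eq_square algebra_simps)
      then show False using small lam by (simp add: algebra_simps)
    qed
  qed
  then have "S = B" "B = B'" using BS B' by auto
  then show "{p. lam/2 < a p} = {p. b \<le> a p}" "card {p. b \<le> a p} = N"
    using B' unfolding S_def B_def by auto
qed

lemma residual_le_of_scalar_min_sum:
  fixes a :: "'p::finite \<Rightarrow> real"
  assumes lam: "0 < lam"
    and total: "(\<Sum>p\<in>UNIV. scalar_min lam (a p)) \<le> lam * N"
    and card: "card {p. lam/2 < a p} = N"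
  shows "(\<Sum>p\<in>-{p. lam/2 < a p}. a p) \<le> lam * N / 2"
proof -
  define S where "S = {p. lam/2 < a p}"
  have "(\<Sum>p\<in>-S. a p) = (\<Sum>p\<in>-S. scalar_min lam (a p))"
    unfolding S_def by (intro sum.cong) (auto simp: scalar_min_def)
  moreover have "real N * (lam/2) \<le> (\<Sum>p\<in>S. scalar_min lam (a p))"
    using sum_bounded_below[of S "lam/2"] scalar_min_ge_half[OF lam] card
    unfolding S_def by simp
  moreover have "(\<Sum>p\<in>UNIV. scalar_min lam (a p))
      = (\<Sum>p\<in>S. scalar_min lam (a p)) + (\<Sum>p\<in>-S. scalar_min lam (a p))"
    by (subst sum.union_disjoint[symmetric]) (auto intro: sum.cong)
  ultimately show ?thesis using total unfolding S_def by (simp add: algebra_simps)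
qed

lemma card_large_values:
  fixes a :: "'p::finite \<Rightarrow> real"
  assumes "0 < e" "N \<le> CARD('p)"
    and residual: "\<And>T. card T < N \<Longrightarrow> e \<le> (\<Sum>p\<in>-T. a p)"
  shows "N \<le> card {p. e / CARD('p) \<le> a p}"
proof (rule ccontr)
  define B where "B = {p. e / CARD('p) \<le> a p}"
  assume "\<not> N \<le> card {p. e / CARD('p) \<le> a p}"
  then have "card B < N" unfolding B_def by simp
  then have "B \<noteq> UNIV" using assms(2) by auto
  then have "(\<Sum>p\<in>-B. a p) < (\<Sum>p\<in>-B. e / CARD('p))"
    by (intro sum_strict_mono) (auto simp: B_def)
  also have "\<dots> = real (card (-B)) * (e / CARD('p))" by simp
  also have "\<dots> \<le> real CARD('p) * (e / CARD('p))"
    using assms(1) by (intro mult_right_mono) (auto intro: card_mono)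
  also have "\<dots> = e" by simp
  finally show False using residual[OF \<open>card B < N\<close>] by simp
qed

lemma uniform_positive_lower_bound:
  fixes q :: "'t \<Rightarrow> 'a::topological_space \<Rightarrow> real"
  assumes "finite F" "compact K" "\<And>T. T \<in> F \<Longrightarrow> continuous_on K (q T)"
    and "\<And>T z. T \<in> F \<Longrightarrow> z \<in> K \<Longrightarrow> 0 < q T z"
  shows "\<exists>e>0. \<forall>T\<in>F. \<forall>z\<in>K. e \<le> q T z"
  using assms(1,3,4)
proof (induction F rule: finite_induct)
  case empty
  show ?case by (intro exI[of _ 1]) auto
next
  case (insert T F)
  then obtain e where e: "0 < e" "\<forall>T\<in>F. \<forall>z\<in>K. e \<le> q T z" by auto
  have "\<exists>e'>0. \<forall>z\<in>K. e' \<le> q T z"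
  proof (cases "K = {}")
    case False
    then obtain z0 where "z0 \<in> K" "\<forall>z\<in>K. q T z0 \<le> q T z"
      using continuous_attains_inf[OF assms(2)] insert.prems by blast
    then show ?thesis using insert.prems by blast
  qed (intro exI[of _ 1], simp)
  then obtain e' where "0 < e'" "\<forall>z\<in>K. e' \<le> q T z" by blast
  then show ?case
    using e by (intro exI[of _ "min e e'"]) (fastforce intro: min.coboundedI1 min.coboundedI2)
qed

lemma tendsto_at_right_0_if_linear_bound:
  fixes f :: "real \<Rightarrow> real"
  assumes "0 < lt" "\<And>l. 0 < l \<Longrightarrow> l \<le> lt \<Longrightarrow> \<bar>f l\<bar> \<le> C * l"
  shows "(f \<longlongrightarrow> 0) (at_right 0)"
proof (rule Lim_null_comparison)
  show "\<forall>\<^sub>F l in at_right 0. norm (f l) \<le> C * l"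
    using assms unfolding eventually_at_right_field by auto
  have "((\<lambda>l. C * l) \<longlongrightarrow> C * 0) (at_right 0)" by (intro tendsto_intros)
  then show "((\<lambda>l. C * l) \<longlongrightarrow> 0) (at_right 0)" by simp
qed

definition mat_entry :: "real^'n^'m \<Rightarrow> 'm \<times> 'n \<Rightarrow> real" where
  "mat_entry A p = A $ fst p $ snd p"

definition mat_support :: "real^'n^'m \<Rightarrow> ('m \<times> 'n) set" where
  "mat_support A = {p. mat_entry A p \<noteq> 0}"

lemma mat_l0_eq_card_support: "mat_l0 A = card (mat_support A)"
  unfolding mat_l0_def mat_support_def mat_entry_def by (rule arg_cong[where f=card]) auto

lemma mat_l0_le_card: "mat_l0 (A :: real^'n^'m) \<le> CARD('m \<times> 'n)"
  unfolding mat_l0_eq_card_support by (rule card_mono) auto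

lemma nzmask_eq_if_support_eq:
  assumes "mat_support A = mat_support B"
  shows "nzmask A = nzmask B"
proof -
  have "(A$i$j = 0) = (B$i$j = 0)" for i j
  proof -
    have "(i, j) \<in> mat_support A \<longleftrightarrow> (i, j) \<in> mat_support B" using assms by simp
    then show ?thesis by (simp add: mat_support_def mat_entry_def)
  qed
  then show ?thesis unfolding nzmask_def by simp
qed

lemma mat_entry_nzmask: "mat_entry (nzmask A) p = (if mat_entry A p = 0 then 0 else 1)"
  unfolding mat_entry_def nzmask_def by simp

lemma mat_entry_diff: "mat_entry (A - B) p = mat_entry A p - mat_entry B p"
  unfolding mat_entry_def by simp

lemma sum_sum_eq_sum_pairs: "(\<Sum>i\<in>UNIV. \<Sum>j\<in>UNIV. f i j) = (\<Sum>p\<in>UNIV. f (fst p) (snd p))"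
  by (simp add: sum.cartesian_product UNIV_Times_UNIV[symmetric] case_prod_beta
      del: UNIV_Times_UNIV)

lemma mat_linf_le_iff: "mat_linf A \<le> c \<longleftrightarrow> (\<forall>p. \<bar>mat_entry A p\<bar> \<le> c)"
  unfolding mat_linf_def mat_entry_def by (auto simp: case_prod_beta)

lemma abs_mat_entry_le_mat_linf: "\<bar>mat_entry A p\<bar> \<le> mat_linf A"
  using mat_linf_le_iff by blast

lemma mat_linf_nonneg: "0 \<le> mat_linf A"
  using abs_mat_entry_le_mat_linf abs_ge_zero order.trans by blast

lemma abs_d_inf_le:
  assumes "Mt \<in> B"
  shows "\<bar>d_inf M B\<bar> \<le> mat_linf (M - Mt)"
proof -
  have "0 \<le> d_inf M B"
    unfolding d_inf_def using assms by (intro cInf_greatest) (auto intro: mat_linf_nonneg)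
  moreover have "d_inf M B \<le> mat_linf (M - Mt)"
    unfolding d_inf_def using assms
    by (intro cInf_lower) (auto simp: bdd_below_def intro!: exI[of _ 0] mat_linf_nonneg)
  ultimately show ?thesis by simp
qed

lemma tendsto_if_mat_linf_diff_tendsto_0:
  assumes "((\<lambda>l. mat_linf (f l - L)) \<longlongrightarrow> 0) F"
  shows "(f \<longlongrightarrow> L) F"
proof (intro vec_tendstoI)
  fix i j
  have "((\<lambda>l. f l $ i $ j - L $ i $ j) \<longlongrightarrow> 0) F"
    using abs_mat_entry_le_mat_linf[of "f _ - L" "(i, j)"]
    by (intro Lim_null_comparison[OF _ assms] always_eventually) (simp add: mat_entry_def)
  then show "((\<lambda>l. f l $ i $ j) \<longlongrightarrow> L $ i $ j) F" by (rule LIM_zero_cancel)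
qed

section \<open>Solutions of the relaxed problem\<close>

lemma obj_eq_sum_scalar_obj:
  "obj G x lam z M = (\<Sum>p\<in>UNIV. scalar_obj lam ((mat_entry (x - G z) p)^2) (mat_entry M p))"
proof -
  have "(mat_l2 (hadamard (ones_mat - M) x - hadamard (ones_mat - M) (G z)))^2
     = (\<Sum>p\<in>UNIV. (1 - mat_entry M p)^2 * (mat_entry (x - G z) p)^2)"
    unfolding mat_l2_def
    by (subst real_sqrt_pow2)
      (auto intro!: sum_nonneg simp: sum_sum_eq_sum_pairs hadamard_def ones_mat_def mat_entry_def
        power_mult_distrib right_diff_distrib[symmetric])
  moreover have "mat_l1 M = (\<Sum>p\<in>UNIV. \<bar>mat_entry M p\<bar>)"
    unfolding mat_l1_def by (simp add: sum_sum_eq_sum_pairs mat_entry_def)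
  ultimately show ?thesis unfolding obj_def scalar_obj_def
    by (simp add: sum.distrib sum_distrib_left algebra_simps)
qed

lemma obj_nzmask: "obj G x lam z (nzmask (x - G z)) = lam * mat_l0 (x - G z)"
proof -
  have "scalar_obj lam ((mat_entry (x - G z) p)^2) (mat_entry (nzmask (x - G z)) p)
      = (if p \<in> mat_support (x - G z) then lam else 0)" for p
    by (simp add: scalar_obj_def mat_support_def mat_entry_nzmask)
  then show ?thesis
    by (simp add: obj_eq_sum_scalar_obj mat_l0_eq_card_support sum.If_cases)
qed

lemma is_solution_entry:
  assumes sol: "is_solution R G x lam z M" and lam: "0 < lam"
  shows "mat_entry M p = shrink lam ((mat_entry (x - G z) p)^2)"
proof (rule ccontr)
  define a where "a q = (mat_entry (x - G z) q)^2" for q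
  define M' where "M' = (\<chi> i j. shrink lam (a (i, j)))"
  assume "mat_entry M p \<noteq> shrink lam ((mat_entry (x - G z) p)^2)"
  then have "scalar_obj lam (a p) (mat_entry M' p) < scalar_obj lam (a p) (mat_entry M p)"
    using scalar_min_less_scalar_obj[OF lam] scalar_obj_shrink[OF lam]
    by (simp add: M'_def a_def mat_entry_def)
  then have "obj G x lam z M' < obj G x lam z M"
    unfolding obj_eq_sum_scalar_obj a_def[symmetric]
    using scalar_min_le_scalar_obj[OF lam] scalar_obj_shrink[OF lam]
    by (intro sum_strict_mono_ex1) (auto simp: M'_def a_def mat_entry_def)
  moreover have "obj G x lam z M \<le> obj G x lam z M'"
    using sol unfolding is_solution_def by blast
  ultimately show False by simp
qed

lemma is_solution_obj:
  assumes "is_solution R G x lam z M" "0 < lam"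
  shows "obj G x lam z M = (\<Sum>p\<in>UNIV. scalar_min lam ((mat_entry (x - G z) p)^2))"
  by (simp add: obj_eq_sum_scalar_obj is_solution_entry[OF assms] scalar_obj_shrink[OF assms(2)])

lemma is_solution_support:
  assumes "is_solution R G x lam z M" "0 < lam"
  shows "mat_support M = {p. lam/2 < (mat_entry (x - G z) p)^2}"
  using is_solution_entry[OF assms] shrink_eq_0_iff[OF assms(2)]
  by (auto simp: mat_support_def)

lemma mat_linf_solution_minus_nzmask:
  assumes sol: "is_solution R G x lam z M" and lam: "0 < lam" and b: "0 < b"
    and large: "mat_support M \<subseteq> {p. b \<le> (mat_entry (x - G z) p)^2}"
  shows "mat_linf (M - nzmask M) \<le> lam / (2 * b)"
  unfolding mat_linf_le_iff
proof
  fix p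
  define a where "a = (mat_entry (x - G z) p)^2"
  show "\<bar>mat_entry (M - nzmask M) p\<bar> \<le> lam / (2 * b)"
  proof (cases "p \<in> mat_support M")
    case True
    then have "lam/2 < a" "b \<le> a"
      using is_solution_support[OF sol lam] large unfolding a_def by auto
    have "mat_entry (M - nzmask M) p = - (lam / (2 * a))"
      using True is_solution_entry[OF sol lam, of p] \<open>lam/2 < a\<close>
      by (simp add: a_def mat_entry_diff mat_entry_nzmask mat_support_def shrink_def)
    moreover have "lam / (2 * a) \<le> lam / (2 * b)"
      using \<open>b \<le> a\<close> b lam by (intro divide_left_mono) auto
    ultimately show ?thesis using lam \<open>lam/2 < a\<close> by simp
  qed (use lam b in \<open>simp add: mat_support_def mat_entry_diff mat_entry_nzmask\<close>)
qed

section \<open>Sparsest residuals\<close>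

lemma compact_box_set: "compact (box_set R :: (real^'d) set)"
proof -
  have "box_set R = cbox (\<chi> k. -R) (\<chi> k. R :: real^'d)"
    unfolding box_set_def mem_box_cart set_eq_iff by (auto simp: abs_le_iff) (metis minus_le_iff)+
  then show ?thesis by simp
qed

lemma finite_mat_l0_image:
  fixes G :: "'a \<Rightarrow> real^'n^'m"
  shows "finite ((\<lambda>z. mat_l0 (x - G z)) ` S)"
proof (rule finite_subset)
  show "(\<lambda>z. mat_l0 (x - G z)) ` S \<subseteq> {..CARD('m \<times> 'n)}"
    using mat_l0_le_card by auto
qed simp

lemma n_tilde_le: "z \<in> box_set R \<Longrightarrow> n_tilde R G x \<le> mat_l0 (x - G z)"
  unfolding n_tilde_def by (intro Min_le finite_mat_l0_image) auto

lemma Z_tilde_nonempty: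
  assumes "0 \<le> R"
  shows "Z_tilde R G x \<noteq> {}"
proof -
  have "box_set R \<noteq> {}" using assms unfolding box_set_def by (auto intro!: exI[of _ 0])
  then have "n_tilde R G x \<in> (\<lambda>z. mat_l0 (x - G z)) ` box_set R"
    unfolding n_tilde_def by (intro Min_in finite_mat_l0_image) auto
  then show ?thesis unfolding Z_tilde_def by auto
qed

definition sparsest_supports :: "real \<Rightarrow> (real^'d \<Rightarrow> real^'n^'m) \<Rightarrow> real^'n^'m \<Rightarrow> ('m \<times> 'n) set set"
  where "sparsest_supports R G x = (\<lambda>z. mat_support (x - G z)) ` Z_tilde R G x"

lemma card_sparsest_supports: "T \<in> sparsest_supports R G x \<Longrightarrow> card T = n_tilde R G x"
  by (auto simp: sparsest_supports_def Z_tilde_def mat_l0_eq_card_support)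

lemma nzmask_in_M_tilde:
  assumes "mat_support M \<in> sparsest_supports R G x"
  shows "nzmask M \<in> M_tilde R G x"
proof -
  obtain z where "z \<in> Z_tilde R G x" "mat_support M = mat_support (x - G z)"
    using assms unfolding sparsest_supports_def by auto
  then show ?thesis unfolding M_tilde_def using nzmask_eq_if_support_eq by blast
qed

lemma is_solution_obj_le:
  assumes "0 \<le> R" "is_solution R G x lam z M"
  shows "obj G x lam z M \<le> lam * n_tilde R G x"
proof -
  obtain z' where "z' \<in> Z_tilde R G x" using Z_tilde_nonempty[OF assms(1)] by blast
  then have "obj G x lam z M \<le> obj G x lam z' (nzmask (x - G z'))"
    using assms(2) unfolding is_solution_def Z_tilde_def by blast
  also have "\<dots> = lam * n_tilde R G x"
    using \<open>z' \<in> Z_tilde R G x\<close> by (simp add: obj_nzmask Z_tilde_def)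
  finally show ?thesis .
qed

lemma residual_pos:
  assumes "z \<in> box_set R" "card T \<le> n_tilde R G x" "T \<notin> sparsest_supports R G x"
  shows "0 < (\<Sum>p\<in>-T. (mat_entry (x - G z) p)^2)"
proof (rule ccontr)
  assume "\<not> 0 < (\<Sum>p\<in>-T. (mat_entry (x - G z) p)^2)"
  moreover have "0 \<le> (\<Sum>p\<in>-T. (mat_entry (x - G z) p)^2)" by (intro sum_nonneg) simp
  ultimately have "(\<Sum>p\<in>-T. (mat_entry (x - G z) p)^2) = 0" by linarith
  then have "\<forall>p\<in>-T. (mat_entry (x - G z) p)^2 = 0" by (simp add: sum_nonneg_eq_0_iff)
  then have "mat_support (x - G z) \<subseteq> T" by (auto simp: mat_support_def)
  moreover have N_le: "n_tilde R G x \<le> card (mat_support (x - G z))"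
    using n_tilde_le[OF assms(1)] by (simp add: mat_l0_eq_card_support)
  moreover have "card (mat_support (x - G z)) \<le> card T"
    using calculation(1) by (intro card_mono) auto
  ultimately have "mat_support (x - G z) = T" using assms(2) by (intro card_subset_eq) auto
  moreover have "z \<in> Z_tilde R G x"
    using assms(1,2) N_le calculation by (auto simp: Z_tilde_def mat_l0_eq_card_support)
  ultimately show False using assms(3) unfolding sparsest_supports_def by blast
qed

lemma uniform_residual_bound:
  fixes G :: "real^'d \<Rightarrow> real^'n^'m"
  assumes "continuous_on UNIV G"
  obtains e where "0 < e"
    and "\<And>z T. z \<in> box_set R \<Longrightarrow> card T \<le> n_tilde R G x \<Longrightarrow> T \<notin> sparsest_supports R G x
      \<Longrightarrow> e \<le> (\<Sum>p\<in>-T. (mat_entry (x - G z) p)^2)"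
proof -
  have "continuous_on (box_set R) (\<lambda>z. mat_entry (x - G z) p)" for p
    unfolding mat_entry_def
    by (intro continuous_on_component continuous_on_diff continuous_on_const
        continuous_on_subset[OF assms]) auto
  then have "\<exists>e>0. \<forall>T\<in>{T. card T \<le> n_tilde R G x \<and> T \<notin> sparsest_supports R G x}.
      \<forall>z\<in>box_set R. e \<le> (\<Sum>p\<in>-T. (mat_entry (x - G z) p)^2)"
    by (intro uniform_positive_lower_bound compact_box_set continuous_on_sum continuous_on_power
        residual_pos) auto
  then show ?thesis using that by blast
qed

lemma card_large_residual_entries:
  fixes G :: "real^'d \<Rightarrow> real^'n^'m"
  assumes "0 < e" and z: "z \<in> box_set R"
    and residual: "\<And>T. card T \<le> n_tilde R G x \<Longrightarrow> T \<notin> sparsest_supports R G x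
      \<Longrightarrow> e \<le> (\<Sum>p\<in>-T. (mat_entry (x - G z) p)^2)"
  shows "n_tilde R G x \<le> card {p. e / CARD('m \<times> 'n) \<le> (mat_entry (x - G z) p)^2}"
proof (rule card_large_values[OF assms(1)])
  show "n_tilde R G x \<le> CARD('m \<times> 'n)"
    using n_tilde_le[OF z, of G x] mat_l0_le_card[of "x - G z"] by linarith
  show "e \<le> (\<Sum>p\<in>-T. (mat_entry (x - G z) p)^2)" if "card T < n_tilde R G x" for T
  proof (rule residual)
    show "card T \<le> n_tilde R G x" using that by simp
    show "T \<notin> sparsest_supports R G x" using that card_sparsest_supports by fastforce
  qed
qed

section \<open>Support recovery\<close>

lemma solution_support_sparsest:
  fixes G :: "real^'d \<Rightarrow> real^'n^'m"
  assumes R: "0 \<le> R"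
    and residual: "\<And>T. card T \<le> n_tilde R G x \<Longrightarrow> T \<notin> sparsest_supports R G x
      \<Longrightarrow> e \<le> (\<Sum>p\<in>-T. (mat_entry (x - G z) p)^2)"
    and b: "0 < b" "b \<le> e"
    and large: "n_tilde R G x \<le> card {p. b \<le> (mat_entry (x - G z) p)^2}"
    and lam: "0 < lam" "real (n_tilde R G x + 1) * lam \<le> b"
    and sol: "is_solution R G x lam z M"
  shows "mat_support M \<in> sparsest_supports R G x"
    and "mat_support M = {p. b \<le> (mat_entry (x - G z) p)^2}"
proof -
  define N where "N = n_tilde R G x"
  define a where "a p = (mat_entry (x - G z) p)^2" for p
  have supp: "mat_support M = {p. lam/2 < a p}"
    unfolding a_def by (rule is_solution_support[OF sol lam(1)])
  have total: "(\<Sum>p\<in>UNIV. scalar_min lam (a p)) \<le> lam * N"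
    using is_solution_obj[OF sol lam(1)] is_solution_obj_le[OF R sol] by (simp add: a_def N_def)
  have lam_small: "real (N + 1) * lam < 2 * b" "real N * lam \<le> b"
    using lam b unfolding N_def by (auto simp: algebra_simps)
  have eq: "{p. lam/2 < a p} = {p. b \<le> a p}" and card: "card {p. b \<le> a p} = N"
    using thresholded_support[OF lam(1) lam_small(1) _ total] large by (auto simp: a_def N_def)
  have "(\<Sum>p\<in>-mat_support M. a p) \<le> lam * N / 2"
    unfolding supp by (rule residual_le_of_scalar_min_sum[OF lam(1) total]) (unfold eq, rule card)
  also have "\<dots> < e" using lam_small(2) b by (simp add: mult.commute)
  finally show "mat_support M \<in> sparsest_supports R G x"
    using residual card eq supp unfolding a_def N_def by force
  show "mat_support M = {p. b \<le> (mat_entry (x - G z) p)^2}"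
    using supp eq unfolding a_def by simp
qed

lemma support_recovery:
  fixes G :: "real^'d \<Rightarrow> real^'n^'m"
  assumes R: "0 \<le> R" and G: "continuous_on UNIV G"
  obtains lt C where "0 < lt"
    and "\<And>lam M. 0 < lam \<Longrightarrow> lam \<le> lt \<Longrightarrow> opt_M R G x lam M
      \<Longrightarrow> nzmask M \<in> M_tilde R G x \<and> mat_linf (M - nzmask M) \<le> C * lam"
proof -
  obtain e where e: "0 < e" and residual: "\<And>z T. z \<in> box_set R \<Longrightarrow> card T \<le> n_tilde R G x
      \<Longrightarrow> T \<notin> sparsest_supports R G x \<Longrightarrow> e \<le> (\<Sum>p\<in>-T. (mat_entry (x - G z) p)^2)"
    using uniform_residual_bound[OF G] by blast
  define b where "b = e / CARD('m \<times> 'n)"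
  have b: "0 < b" "b \<le> e"
    unfolding b_def using e by (simp, simp add: divide_le_eq Suc_le_eq flip: of_nat_mult)
  show ?thesis
  proof
    show "0 < b / (n_tilde R G x + 1)" using b by simp
    fix lam M assume lam: "0 < lam" "lam \<le> b / (n_tilde R G x + 1)" and "opt_M R G x lam M"
    then obtain z where sol: "is_solution R G x lam z M" unfolding opt_M_def by blast
    then have z: "z \<in> box_set R" unfolding is_solution_def by blast
    have "real (n_tilde R G x + 1) * lam \<le> b"
      using lam(2) by (simp add: le_divide_eq mult.commute)
    have "n_tilde R G x \<le> card {p. b \<le> (mat_entry (x - G z) p)^2}"
      unfolding b_def by (rule card_large_residual_entries[where G = G and x = x, OF e z residual[OF z]])
    note supp = solution_support_sparsest[OF R residual[OF z] b this lam(1) \<open>_ \<le> b\<close> sol]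
    have "mat_linf (M - nzmask M) \<le> lam / (2 * b)"
      using supp(2) by (intro mat_linf_solution_minus_nzmask[OF sol lam(1) b(1)]) simp
    then show "nzmask M \<in> M_tilde R G x \<and> mat_linf (M - nzmask M) \<le> 1 / (2 * b) * lam"
      using nzmask_in_M_tilde[OF supp(1)] by simp
  qed
qed

theorem theorem2:
  fixes R :: real and n0 :: nat
    and x :: "real^'n^'m" and G :: "real^'d \<Rightarrow> real^'n^'m"
    and zstar :: "real^'d"
    and Mhat :: "real \<Rightarrow> real^'n^'m"
  assumes "n0 > 0" and "R > 0"
    and "continuous_on UNIV G"
    and "zstar \<in> box_set R" and "mat_l0 (x - G zstar) \<le> n0"
    and "\<forall>lam>0. opt_M R G x lam (Mhat lam)"
  shows "((\<lambda>lam. d_inf (Mhat lam) (M_tilde R G x)) \<longlongrightarrow> 0) (at_right 0) \<and>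
    (\<exists>lt>0.
       (\<forall>lam M. 0 < lam \<and> lam \<le> lt \<and> opt_M R G x lam M \<longrightarrow>
          (\<exists>Mt\<in>M_tilde R G x. Mt = nzmask M)) \<and>
       (Z_tilde R G x = {zstar} \<longrightarrow>
          (Mhat \<longlongrightarrow> nzmask (x - G zstar)) (at_right 0) \<and>
          (\<forall>lam M. 0 < lam \<and> lam \<le> lt \<and> opt_M R G x lam M \<longrightarrow>
             nzmask M = nzmask (x - G zstar))))"
proof -
  obtain lt C where lt: "0 < lt" and recovery: "\<And>lam M. 0 < lam \<Longrightarrow> lam \<le> lt
      \<Longrightarrow> opt_M R G x lam M \<Longrightarrow> nzmask M \<in> M_tilde R G x \<and> mat_linf (M - nzmask M) \<le> C * lam"
    using support_recovery[of R G x] assms(2,3) by auto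
  have Mhat: "nzmask (Mhat lam) \<in> M_tilde R G x" "mat_linf (Mhat lam - nzmask (Mhat lam)) \<le> C * lam"
    if "0 < lam" "lam \<le> lt" for lam
    using recovery[OF that] assms(6) that by auto
  have "\<bar>d_inf (Mhat lam) (M_tilde R G x)\<bar> \<le> C * lam" if "0 < lam" "lam \<le> lt" for lam
    using abs_d_inf_le[OF Mhat(1)[OF that]] Mhat(2)[OF that] by (rule order.trans)
  then have "((\<lambda>lam. d_inf (Mhat lam) (M_tilde R G x)) \<longlongrightarrow> 0) (at_right 0)"
    by (rule tendsto_at_right_0_if_linear_bound[OF lt])
  moreover have "(Mhat \<longlongrightarrow> nzmask (x - G zstar)) (at_right 0) \<and>
      (\<forall>lam M. 0 < lam \<and> lam \<le> lt \<and> opt_M R G x lam M \<longrightarrow> nzmask M = nzmask (x - G zstar))"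
    if "Z_tilde R G x = {zstar}"
  proof -
    have masks: "M_tilde R G x = {nzmask (x - G zstar)}" using that by (simp add: M_tilde_def)
    then have "\<bar>mat_linf (Mhat lam - nzmask (x - G zstar))\<bar> \<le> C * lam"
      if "0 < lam" "lam \<le> lt" for lam
      using Mhat[OF that] by (simp add: mat_linf_nonneg)
    then have "(Mhat \<longlongrightarrow> nzmask (x - G zstar)) (at_right 0)"
      by (intro tendsto_if_mat_linf_diff_tendsto_0 tendsto_at_right_0_if_linear_bound[OF lt])
    then show ?thesis using recovery masks by blast
  qed
  ultimately show ?thesis using recovery lt by blast
qed

end
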